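(* For every integer $g\ge 3$, the graph $W'_g$ does not belong to 2-CBU.
   Context: For $g\ge 3$, the double wheel $W^2_g$ is obtained from a cycle $C_g$ of length $g$ by adding two non-adjacent new vertices, each adjacent to every vertex of $C_g$; an edge not contained in $C_g$ is called a ray. $W'_g$ is obtained from $W^2_g$ by subdividing every ray $\lfloor g/2\rfloor$ times (replacing it by a path with $\lfloor g/2\rfloor$ internal vertices); it is planar of girth $g$. Let $e_1,e_2$ be the standard basis of $\mathbb{R}^2$. A graph belongs to 2-CBU if one can assign to each vertex an axis-parallel rectangle (product of two closed intervals of positive length) in $\mathbb{R}^2$ such that the rectangles have pairwise disjoint interiors, two distinct vertices are adjacent iff their rectangles intersect, and any two intersecting rectangles intersect in a segment of positive length orthogonal to $e_1$. *)

theory Defs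
  imports "HOL-Analysis.Analysis"
begin

text \<open>Points of the plane are pairs (x,y) :: real \<times> real, e1 being the x-direction.
  A segment of positive length orthogonal to e1 is a vertical segment {c} \<times> {a..b} with a < b.\<close>

definition is_rect :: "(real \<times> real) set \<Rightarrow> bool" where
  "is_rect R \<longleftrightarrow> (\<exists>a b c d. a < b \<and> c < d \<and> R = {a..b} \<times> {c..d})"

definition is_vertical_segment :: "(real \<times> real) set \<Rightarrow> bool" where
  "is_vertical_segment S \<longleftrightarrow> (\<exists>c a b. a < b \<and> S = {c} \<times> {a..b})"

definition cbu2 :: "'v set \<Rightarrow> ('v \<Rightarrow> 'v \<Rightarrow> bool) \<Rightarrow> bool" where
  "cbu2 V E \<longleftrightarrow> (\<exists>R :: 'v \<Rightarrow> (real \<times> real) set.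
      (\<forall>v\<in>V. is_rect (R v)) \<and>
      (\<forall>u\<in>V. \<forall>v\<in>V. u \<noteq> v \<longrightarrow> interior (R u) \<inter> interior (R v) = {}) \<and>
      (\<forall>u\<in>V. \<forall>v\<in>V. u \<noteq> v \<longrightarrow> (E u v \<longleftrightarrow> R u \<inter> R v \<noteq> {})) \<and>
      (\<forall>u\<in>V. \<forall>v\<in>V. u \<noteq> v \<and> R u \<inter> R v \<noteq> {} \<longrightarrow> is_vertical_segment (R u \<inter> R v)))"

text \<open>Vertices: cycle vertices Cyc i (i < g), the two apexes Apex a (a < 2), and the internal
  vertices Sub a i j (j < g div 2) of the subdivided ray from Apex a to Cyc i, numbered
  from the apex side.\<close>

datatype wv = Cyc nat | Apex nat | Sub nat nat nat

definition wp_verts :: "nat \<Rightarrow> wv set" where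
  "wp_verts g = {Cyc i | i. i < g} \<union> {Apex a | a. a < 2}
     \<union> {Sub a i j | a i j. a < 2 \<and> i < g \<and> j < g div 2}"

fun wp_arc :: "nat \<Rightarrow> wv \<Rightarrow> wv \<Rightarrow> bool" where
  "wp_arc g (Cyc i) (Cyc j) = (i < g \<and> j = Suc i mod g)"
| "wp_arc g (Apex a) (Sub b i j) = (a < 2 \<and> b = a \<and> i < g \<and> j = 0 \<and> 0 < g div 2)"
| "wp_arc g (Sub a i j) (Sub b i' j') =
     (a < 2 \<and> b = a \<and> i' = i \<and> i < g \<and> j' = Suc j \<and> Suc j < g div 2)"
| "wp_arc g (Sub a i j) (Cyc i') = (a < 2 \<and> i < g \<and> i' = i \<and> Suc j = g div 2)"
| "wp_arc g _ _ = False"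

definition wp_adj :: "nat \<Rightarrow> wv \<Rightarrow> wv \<Rightarrow> bool" where
  "wp_adj g u v \<longleftrightarrow> wp_arc g u v \<or> wp_arc g v u"

end

theory Submission
  imports Defs
begin

text \<open>Joining
  the centres of the rectangles of a cycle through the midpoints of consecutive contacts gives a
  closed rectilinear polygon inside the union of these rectangles.  By a discrete Jordan curve
  argument, the parity of the number of its vertical edges met by a leftward ray is constant on
  every rectangle off the cycle and agrees on adjacent such rectangles.

  In \<open>W'_g\<close> the rim vertex \<open>Cyc 0\<close> has four neighbours, its two rim neighbours and the last
  vertices of the two rays at it, which touch it at four distinct boundary points.  The two cycles
  formed by \<open>Apex 0\<close>, a ray and a rim edge at \<open>Cyc 0\<close> avoid \<open>Apex 1\<close> and its rays; this forces
  a cyclic order of the four contacts in which the rim separates the two rays, so one apex lies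
  inside the rim.  Then every rim vertex has an inside neighbour on a ray of that apex.  That is
  impossible: going up from the inside rectangle with the highest top, the first rectangle met is
  either inside and higher, or a rim rectangle whose inside neighbour reaches higher still, since
  they touch along a vertical segment of positive length.\<close>

section \<open>Ray crossings of rectilinear polygons\<close>

definition next_mod :: "nat \<Rightarrow> nat \<Rightarrow> nat" where
  "next_mod k i = Suc i mod k"

lemma next_mod_eq: "i < k \<Longrightarrow> next_mod k i = (if Suc i = k then 0 else Suc i)"
  unfolding next_mod_def by auto

lemma next_mod_less: "0 < k \<Longrightarrow> next_mod k i < k"
  unfolding next_mod_def by simp

lemma next_mod_neq: "\<lbrakk>1 < k; i < k\<rbrakk> \<Longrightarrow> next_mod k i \<noteq> i"
  by (simp add: next_mod_eq)

lemma next_mod_inj: "\<lbrakk>i < k; j < k; next_mod k i = next_mod k j\<rbrakk> \<Longrightarrow> i = j"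
  by (simp add: next_mod_eq split: if_splits)

lemma sum_next_mod:
  fixes f :: "nat \<Rightarrow> 'a::comm_monoid_add"
  assumes "0 < k"
  shows "(\<Sum>i<k. f (next_mod k i)) = (\<Sum>i<k. f i)"
proof -
  obtain m where k: "k = Suc m"
    using assms by (cases k) auto
  have "(\<Sum>i<k. f (next_mod k i)) = (\<Sum>i<m. f (Suc i)) + f 0"
    by (simp add: k next_mod_def)
  also have "\<dots> = (\<Sum>i<k. f i)"
    unfolding k sum.lessThan_Suc_shift by (simp add: add.commute)
  finally show ?thesis .
qed

definition in_span :: "real \<Rightarrow> real \<Rightarrow> real \<Rightarrow> bool" where
  "in_span y a c \<longleftrightarrow> min a c \<le> y \<and> y < max a c"

lemma in_span_change:
  "y1 \<le> y2 \<Longrightarrow>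
    (in_span y1 a c \<noteq> in_span y2 a c) = ((y1 < a \<and> a \<le> y2) \<noteq> (y1 < c \<and> c \<le> y2))"
  unfolding in_span_def by (auto simp: min_def max_def)

text \<open>The closed rectilinear polygon with horizontal edges at height \<open>H i\<close> from \<open>x = M i\<close> to
  \<open>x = M (i + 1)\<close> and vertical edges at \<open>x = M (i + 1)\<close> from \<open>H i\<close> to \<open>H (i + 1)\<close> (indices
  mod \<open>k\<close>).  \<open>crossings\<close> counts the vertical edges met by the leftward ray from \<open>(x, y)\<close>; the
  half-open spans make its parity the inside/outside indicator of the polygon.\<close>

definition crossings :: "nat \<Rightarrow> (nat \<Rightarrow> real) \<Rightarrow> (nat \<Rightarrow> real) \<Rightarrow> real \<Rightarrow> real \<Rightarrow> nat" where
  "crossings k M H x y =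
     (\<Sum>i<k. if M (next_mod k i) < x \<and> in_span y (H i) (H (next_mod k i)) then 1 else 0)"

lemma crossings_shift_right:
  assumes "x1 \<le> x2"
  shows "crossings k M H x2 y = crossings k M H x1 y
    + (\<Sum>i<k. if x1 \<le> M (next_mod k i) \<and> M (next_mod k i) < x2
                \<and> in_span y (H i) (H (next_mod k i)) then 1 else 0)"
  unfolding crossings_def sum.distrib[symmetric] using assms by (intro sum.cong) auto

text \<open>A vertical edge changes its contribution exactly when one of its two end heights lies in
  \<open>(y1, y2]\<close>.  So, modulo 2, a horizontal edge at such a height is counted once for each of its
  ends left of \<open>x\<close>, i.e. once precisely when it crosses the vertical line through \<open>x\<close>.\<close>

lemma crossings_shift_up_parity:
  assumes "0 < k" "y1 \<le> y2"
  shows "even (crossings k M H x y1 + crossings k M H x y2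
     + (\<Sum>j<k. if y1 < H j \<and> H j \<le> y2 \<and> (M j < x) \<noteq> (M (next_mod k j) < x) then 1 else 0))"
proof -
  define left where "left j \<longleftrightarrow> M j < x" for j
  define hit where "hit j \<longleftrightarrow> y1 < H j \<and> H j \<le> y2" for j
  define both :: "nat \<Rightarrow> nat" where "both j = (if left j \<and> hit j then 1 else 0)" for j
  define F :: "nat \<Rightarrow> nat" where
    "F i = (if left (next_mod k i) \<and> in_span y1 (H i) (H (next_mod k i)) then 1 else 0)
         + (if left (next_mod k i) \<and> in_span y2 (H i) (H (next_mod k i)) then 1 else 0)
         + (if hit i \<and> left i \<noteq> left (next_mod k i) then 1 else 0)" for i
  have sum_F: "crossings k M H x y1 + crossings k M H x y2
     + (\<Sum>j<k. if y1 < H j \<and> H j \<le> y2 \<and> (M j < x) \<noteq> (M (next_mod k j) < x) then 1 else 0)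
     = (\<Sum>i<k. F i)"
    unfolding crossings_def F_def left_def hit_def by (simp add: sum.distrib)
  have "even (F i + both (next_mod k i) + both i)" for i
  proof -
    have "(in_span y1 (H i) (H (next_mod k i)) \<noteq> in_span y2 (H i) (H (next_mod k i)))
        = (hit i \<noteq> hit (next_mod k i))"
      using in_span_change[OF assms(2)] unfolding hit_def by blast
    then show ?thesis
      unfolding F_def both_def
      by (cases "left i"; cases "left (next_mod k i)"; cases "hit i"; cases "hit (next_mod k i)";
          cases "in_span y1 (H i) (H (next_mod k i))"; cases "in_span y2 (H i) (H (next_mod k i))";
          simp)
  qed
  then have "even (\<Sum>i<k. F i + both (next_mod k i) + both i)"
    by (intro dvd_sum) auto
  also have "(\<Sum>i<k. F i + both (next_mod k i) + both i) = (\<Sum>i<k. F i) + 2 * (\<Sum>i<k. both i)"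
    using sum_next_mod[OF assms(1), of both] by (simp add: sum.distrib)
  finally show ?thesis
    using sum_F by simp
qed

section \<open>Contact representations by rectangles\<close>

lemma vertical_segment_box:
  fixes a b c d :: real
  assumes "is_vertical_segment ({a..b} \<times> {c..d})"
  shows "a = b \<and> c < d"
proof -
  obtain x y1 y2 where "y1 < y2" and box: "{a..b} \<times> {c..d} = {x} \<times> {y1..y2}"
    using assms unfolding is_vertical_segment_def by blast
  then have "{a..b} = {x}" "{c..d} = {y1..y2}"
    by (auto simp: times_eq_iff)
  with \<open>y1 < y2\<close> show ?thesis
    by (metis atLeastAtMost_singleton_iff Icc_eq_Icc order_less_imp_le)
qed

lemma interior_boxes_disjoint_iff:
  fixes a b c d a' b' c' d' :: real
  assumes "a < b" "c < d" "a' < b'" "c' < d'"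
  shows "interior ({a..b} \<times> {c..d}) \<inter> interior ({a'..b'} \<times> {c'..d'}) = {}
    \<longleftrightarrow> \<not> (a < b' \<and> a' < b \<and> c < d' \<and> c' < d)"
  using assms by (auto simp: interior_Times Times_Int_Times)

lemma boxes_meet_in_vertical_segment:
  fixes a b c d a' b' c' d' :: real
  assumes "a < b" "a' < b'"
    and "is_vertical_segment ({a..b} \<times> {c..d} \<inter> {a'..b'} \<times> {c'..d'})"
  shows "(b = a' \<or> b' = a) \<and> c < d' \<and> c' < d"
proof -
  have "max a a' = min b b'" "max c c' < min d d'"
    using vertical_segment_box[of "max a a'" "min b b'" "max c c'" "min d d'"] assms(3)
    by (simp_all add: Times_Int_Times)
  with assms(1,2) show ?thesis
    by (auto simp: max_def min_def split: if_splits)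
qed

text \<open>The rectangle of \<open>v\<close> is \<open>{l v..r v} \<times> {b v..t v}\<close>; of the contact condition only the
  direction ``adjacent implies touching'' is needed.\<close>

locale rect_contact_rep =
  fixes V :: "'v set" and E :: "'v \<Rightarrow> 'v \<Rightarrow> bool" and l r b t :: "'v \<Rightarrow> real"
  assumes l_less_r: "v \<in> V \<Longrightarrow> l v < r v"
    and b_less_t: "v \<in> V \<Longrightarrow> b v < t v"
    and no_overlap: "\<lbrakk>u \<in> V; v \<in> V; u \<noteq> v\<rbrakk> \<Longrightarrow> \<not> (l u < r v \<and> l v < r u \<and> b u < t v \<and> b v < t u)"
    and touch_vertical: "\<lbrakk>u \<in> V; v \<in> V; u \<noteq> v; l u \<le> r v; l v \<le> r u; b u \<le> t v; b v \<le> t u\<rbrakk>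
      \<Longrightarrow> (r u = l v \<or> r v = l u) \<and> b u < t v \<and> b v < t u"
    and adj_touch: "\<lbrakk>u \<in> V; v \<in> V; u \<noteq> v; E u v\<rbrakk>
      \<Longrightarrow> l u \<le> r v \<and> l v \<le> r u \<and> b u \<le> t v \<and> b v \<le> t u"

lemma is_rect_coordinates:
  assumes "is_rect R"
  shows "Inf (fst ` R) < Sup (fst ` R) \<and> Inf (snd ` R) < Sup (snd ` R)
    \<and> R = {Inf (fst ` R)..Sup (fst ` R)} \<times> {Inf (snd ` R)..Sup (snd ` R)}"
  using assms unfolding is_rect_def by auto

lemma cbu2_imp_rect_contact_rep:
  assumes "cbu2 V E"
  shows "\<exists>l r b t. rect_contact_rep V E l r b t"
proof -
  obtain R :: "'a \<Rightarrow> (real \<times> real) set" where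
    rect: "\<forall>v\<in>V. is_rect (R v)" and
    disj: "\<forall>u\<in>V. \<forall>v\<in>V. u \<noteq> v \<longrightarrow> interior (R u) \<inter> interior (R v) = {}" and
    adj: "\<forall>u\<in>V. \<forall>v\<in>V. u \<noteq> v \<longrightarrow> (E u v \<longleftrightarrow> R u \<inter> R v \<noteq> {})" and
    vert: "\<forall>u\<in>V. \<forall>v\<in>V. u \<noteq> v \<and> R u \<inter> R v \<noteq> {} \<longrightarrow> is_vertical_segment (R u \<inter> R v)"
    using assms unfolding cbu2_def by (elim exE conjE) (rule that)
  define l where "l v = Inf (fst ` R v)" for v
  define r where "r v = Sup (fst ` R v)" for v
  define b where "b v = Inf (snd ` R v)" for v
  define t where "t v = Sup (snd ` R v)" for v
  have box: "l v < r v" "b v < t v" "R v = {l v..r v} \<times> {b v..t v}" if "v \<in> V" for v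
    using is_rect_coordinates rect that unfolding l_def r_def b_def t_def by blast+
  have meet_iff: "R u \<inter> R v \<noteq> {} \<longleftrightarrow> l u \<le> r v \<and> l v \<le> r u \<and> b u \<le> t v \<and> b v \<le> t u"
    if "u \<in> V" "v \<in> V" for u v
    using box[OF that(1)] box[OF that(2)] by (auto simp: Times_Int_Times max_def min_def)
  have "rect_contact_rep V E l r b t"
  proof
    fix u v assume uv: "u \<in> V" "v \<in> V" "u \<noteq> v"
    show "\<not> (l u < r v \<and> l v < r u \<and> b u < t v \<and> b v < t u)"
      using disj uv box interior_boxes_disjoint_iff by metis
    show "(r u = l v \<or> r v = l u) \<and> b u < t v \<and> b v < t u"
      if "l u \<le> r v" "l v \<le> r u" "b u \<le> t v" "b v \<le> t u"
      using boxes_meet_in_vertical_segment[of "l u" "r u" "l v" "r v" "b u" "t u" "b v" "t v"]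
        vert box meet_iff uv that by metis
    show "l u \<le> r v \<and> l v \<le> r u \<and> b u \<le> t v \<and> b v \<le> t u" if "E u v"
      using adj meet_iff uv that by blast
  qed (use box in auto)
  then show ?thesis by blast
qed

section \<open>Cycles of a contact representation\<close>

text \<open>A contact point on a vertical side of a rectangle is encoded as (lies on the left side, height).
  \<open>boundary_arc p q z\<close> says that \<open>z\<close> lies on the arc of the boundary between \<open>p\<close> and \<open>q\<close> that
  avoids the top side.\<close>

definition boundary_arc :: "bool \<times> real \<Rightarrow> bool \<times> real \<Rightarrow> bool \<times> real \<Rightarrow> bool" where
  "boundary_arc p q z \<longleftrightarrow> (snd z < snd p \<and> fst p = fst z) \<noteq> (snd z < snd q \<and> fst q = fst z)"

text \<open>Of the three ways to split four distinct points of a circle into two pairs, exactly one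
  splits them into interleaving pairs.\<close>

lemma boundary_arc_four_points:
  assumes "distinct [a, b, p, n]"
    and "boundary_arc b p a = boundary_arc b p n"
    and "boundary_arc a p b = boundary_arc a p n"
  shows "boundary_arc b a p \<noteq> boundary_arc b a n"
  using assms unfolding boundary_arc_def prod_eq_iff distinct.simps set_simps insert_iff empty_iff
  by smt

context rect_contact_rep
begin

lemma adj_contact:
  "\<lbrakk>u \<in> V; v \<in> V; u \<noteq> v; E u v\<rbrakk> \<Longrightarrow> (r u = l v \<or> r v = l u) \<and> b u < t v \<and> b v < t u"
  using adj_touch touch_vertical by blast

lemma adj_contact_one_side:
  assumes "e \<in> V" "Q \<in> V" "e \<noteq> Q" "E e Q \<or> E Q e"
  shows "(r e = l Q) \<noteq> (l e = r Q)"
  using adj_contact[OF assms(1-3)] adj_contact[OF assms(2,1) assms(3)[symmetric]] assms(4)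
    l_less_r[OF assms(1)] l_less_r[OF assms(2)] by auto

definition contact_height :: "'v \<Rightarrow> 'v \<Rightarrow> real" where
  "contact_height u v = (max (b u) (b v) + min (t u) (t v)) / 2"

lemma contact_height_commute: "contact_height u v = contact_height v u"
  unfolding contact_height_def by (simp add: max.commute min.commute)

lemma contact_height_bounds:
  assumes "u \<in> V" "v \<in> V" "u \<noteq> v" "E u v"
  shows "b u < contact_height u v \<and> contact_height u v < t u
    \<and> b v < contact_height u v \<and> contact_height u v < t v"
  using adj_contact[OF assms] b_less_t[OF assms(1)] b_less_t[OF assms(2)]
  unfolding contact_height_def by (auto simp: max_def min_def)

definition in_rect :: "'v \<Rightarrow> real \<Rightarrow> real \<Rightarrow> bool" where
  "in_rect w x y \<longleftrightarrow> l w \<le> x \<and> x \<le> r w \<and> b w \<le> y \<and> y \<le> t w"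

lemma interior_point_not_in_rect:
  "\<lbrakk>v \<in> V; w \<in> V; v \<noteq> w; l v < x; x < r v; b v < y; y < t v\<rbrakk> \<Longrightarrow> \<not> in_rect w x y"
  using no_overlap[of w v] unfolding in_rect_def by force

lemma contact_point_in_rect:
  assumes "u \<in> V" "v \<in> V" "w \<in> V" "r u = x" "l v = x"
    and "b u < y" "y < t u" "b v < y" "y < t v" "in_rect w x y"
  shows "w = u \<or> w = v"
proof (rule ccontr)
  assume "\<not> (w = u \<or> w = v)"
  then show False
    using no_overlap[of w u] no_overlap[of w v] assms l_less_r[of u] l_less_r[of v] l_less_r[of w]
    unfolding in_rect_def by (cases "l w < x") force+
qed

definition xmid :: "'v \<Rightarrow> real" where
  "xmid v = (l v + r v) / 2"

lemma xmid_bounds: "v \<in> V \<Longrightarrow> l v < xmid v \<and> xmid v < r v"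
  using l_less_r unfolding xmid_def by force

definition is_cycle :: "nat \<Rightarrow> (nat \<Rightarrow> 'v) \<Rightarrow> bool" where
  "is_cycle k vs \<longleftrightarrow> 3 \<le> k \<and> (\<forall>i<k. vs i \<in> V \<and> E (vs i) (vs (next_mod k i))) \<and> inj_on vs {..<k}"

lemma is_cycle_pos: "is_cycle k vs \<Longrightarrow> 0 < k"
  unfolding is_cycle_def by auto

lemma is_cycleD:
  assumes "is_cycle k vs" "i < k"
  shows "next_mod k i < k" "vs i \<in> V" "vs (next_mod k i) \<in> V"
    "vs i \<noteq> vs (next_mod k i)" "E (vs i) (vs (next_mod k i))"
proof -
  show "next_mod k i < k"
    using next_mod_less is_cycle_pos[OF assms(1)] .
  then show "vs i \<in> V" "vs (next_mod k i) \<in> V" "E (vs i) (vs (next_mod k i))"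
    using assms unfolding is_cycle_def by auto
  have "1 < k"
    using assms(1) unfolding is_cycle_def by simp
  then show "vs i \<noteq> vs (next_mod k i)"
    using assms next_mod_neq[of k i] \<open>next_mod k i < k\<close> unfolding is_cycle_def inj_on_def
    by (metis lessThan_iff)
qed

lemma is_cycle_inj: "\<lbrakk>is_cycle k vs; i < k; j < k; vs i = vs j\<rbrakk> \<Longrightarrow> i = j"
  unfolding is_cycle_def inj_on_def by auto

definition edge_height :: "nat \<Rightarrow> (nat \<Rightarrow> 'v) \<Rightarrow> nat \<Rightarrow> real" where
  "edge_height k vs j = contact_height (vs j) (vs (next_mod k j))"

text \<open>The polygon of a cycle runs through the centres of its rectangles and passes from \<open>vs j\<close> to
  \<open>vs (j + 1)\<close> at the mid-height of their contact, so it stays inside the union of the rectangles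
  of the cycle and meets other rectangles nowhere.\<close>

definition cycle_crossings :: "nat \<Rightarrow> (nat \<Rightarrow> 'v) \<Rightarrow> real \<Rightarrow> real \<Rightarrow> nat" where
  "cycle_crossings k vs = crossings k (\<lambda>i. xmid (vs i)) (edge_height k vs)"

text \<open>Only meaningful for \<open>w\<close> off the cycle, where the parity is the same at every point of
  the rectangle of \<open>w\<close> (\<open>inside_iff_parity_in_rect\<close>).\<close>

definition inside_cycle :: "nat \<Rightarrow> (nat \<Rightarrow> 'v) \<Rightarrow> 'v \<Rightarrow> bool" where
  "inside_cycle k vs w \<longleftrightarrow> odd (cycle_crossings k vs (l w) (b w))"

lemma edge_height_bounds:
  assumes "is_cycle k vs" "j < k"
  shows "b (vs j) < edge_height k vs j \<and> edge_height k vs j < t (vs j)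
    \<and> b (vs (next_mod k j)) < edge_height k vs j \<and> edge_height k vs j < t (vs (next_mod k j))"
  unfolding edge_height_def using contact_height_bounds is_cycleD[OF assms] by blast

lemma vertical_edge_interior:
  assumes "is_cycle k vs" "i < k" "in_span y (edge_height k vs i) (edge_height k vs (next_mod k i))"
  shows "b (vs (next_mod k i)) < y \<and> y < t (vs (next_mod k i))"
  using assms(3) edge_height_bounds[OF assms(1,2)]
    edge_height_bounds[OF assms(1) is_cycleD(1)[OF assms(1,2)]]
  unfolding in_span_def by auto

lemma horizontal_edge_crossing_cases:
  assumes "is_cycle k vs" "j < k"
    and cross: "(xmid (vs j) < x) \<noteq> (xmid (vs (next_mod k j)) < x)"
  obtains "l (vs j) < x" "x < r (vs j)"
    | "l (vs (next_mod k j)) < x" "x < r (vs (next_mod k j))"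
    | "r (vs j) = x" "l (vs (next_mod k j)) = x"
    | "r (vs (next_mod k j)) = x" "l (vs j) = x"
proof -
  define u v where "u = vs j" and "v = vs (next_mod k j)"
  note cases = that[folded u_def v_def]
  have "u \<in> V" "v \<in> V" "u \<noteq> v" "E u v"
    using is_cycleD[OF assms(1,2)] unfolding u_def v_def by auto
  then have contact: "r u = l v \<or> r v = l u"
    and mid: "l u < xmid u" "xmid u < r u" "l v < xmid v" "xmid v < r v"
    using adj_contact xmid_bounds by blast+
  have cross': "(xmid u < x) \<noteq> (xmid v < x)"
    using cross unfolding u_def v_def .
  from contact show ?thesis
  proof
    assume uv: "r u = l v"
    with cross' mid have x: "xmid u < x" "x \<le> xmid v"
      by auto
    consider "x < r u" | "x = r u" | "r u < x"
      by linarith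
    then show ?thesis
    proof cases
      case 1
      then show ?thesis using x mid by (intro cases(1)) linarith+
    next
      case 2
      then show ?thesis using uv by (intro cases(3)) simp_all
    next
      case 3
      then show ?thesis using x mid uv by (intro cases(2)) linarith+
    qed
  next
    assume vu: "r v = l u"
    with cross' mid have x: "xmid v < x" "x \<le> xmid u"
      by auto
    consider "x < r v" | "x = r v" | "r v < x"
      by linarith
    then show ?thesis
    proof cases
      case 1
      then show ?thesis using x mid by (intro cases(2)) linarith+
    next
      case 2
      then show ?thesis using vu by (intro cases(4)) simp_all
    next
      case 3
      then show ?thesis using x mid vu by (intro cases(1)) linarith+
    qed
  qed
qed

lemma cycle_crossings_shift_right_clear:
  assumes "is_cycle k vs" "x1 \<le> x2"
    and "\<And>i. \<lbrakk>i < k; x1 \<le> xmid (vs i); xmid (vs i) < x2; b (vs i) < y; y < t (vs i)\<rbrakk> \<Longrightarrow> False"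
  shows "cycle_crossings k vs x2 y = cycle_crossings k vs x1 y"
proof -
  have "(\<Sum>i<k. if x1 \<le> xmid (vs (next_mod k i)) \<and> xmid (vs (next_mod k i)) < x2
      \<and> in_span y (edge_height k vs i) (edge_height k vs (next_mod k i)) then 1 else 0) = (0::nat)"
  proof (intro sum.neutral ballI)
    fix i assume "i \<in> {..<k}"
    then show "(if x1 \<le> xmid (vs (next_mod k i)) \<and> xmid (vs (next_mod k i)) < x2
      \<and> in_span y (edge_height k vs i) (edge_height k vs (next_mod k i)) then 1 else 0) = (0::nat)"
      using assms(3)[of "next_mod k i"] vertical_edge_interior[OF assms(1), of i y]
        is_cycleD(1)[OF assms(1)] by auto
  qed
  then show ?thesis
    unfolding cycle_crossings_def using crossings_shift_right[OF assms(2)] by simp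
qed

lemma cycle_crossings_shift_up_clear:
  assumes "is_cycle k vs" "y1 \<le> y2"
    and "\<And>j. \<lbrakk>j < k; y1 < edge_height k vs j; edge_height k vs j \<le> y2;
      (xmid (vs j) < x) \<noteq> (xmid (vs (next_mod k j)) < x)\<rbrakk> \<Longrightarrow> False"
  shows "odd (cycle_crossings k vs x y1) = odd (cycle_crossings k vs x y2)"
proof -
  have "(\<Sum>j<k. if y1 < edge_height k vs j \<and> edge_height k vs j \<le> y2
      \<and> (xmid (vs j) < x) \<noteq> (xmid (vs (next_mod k j)) < x) then 1 else 0) = (0::nat)"
    using assms(3) by (intro sum.neutral) auto
  then show ?thesis
    using crossings_shift_up_parity[OF is_cycle_pos[OF assms(1)] assms(2), of _ _ x]
    unfolding cycle_crossings_def by simp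
qed

lemma cycle_crossings_eq_in_rect_row:
  assumes cyc: "is_cycle k vs" and w: "w \<in> V" "w \<notin> vs ` {..<k}"
    and "x \<le> x'" "in_rect w x y" "in_rect w x' y"
  shows "cycle_crossings k vs x' y = cycle_crossings k vs x y"
proof (rule cycle_crossings_shift_right_clear[OF cyc \<open>x \<le> x'\<close>])
  fix i assume i: "i < k" "x \<le> xmid (vs i)" "xmid (vs i) < x'" "b (vs i) < y" "y < t (vs i)"
  then have "in_rect w (xmid (vs i)) y" "vs i \<noteq> w"
    using assms(3,5,6) unfolding in_rect_def by auto
  then show False
    using interior_point_not_in_rect[of "vs i" w] xmid_bounds is_cycleD(2)[OF cyc i(1)] w(1) i
    by blast
qed

lemma cycle_parity_eq_in_rect_column:
  assumes cyc: "is_cycle k vs" and w: "w \<in> V" "w \<notin> vs ` {..<k}"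
    and "y \<le> y'" "in_rect w x y" "in_rect w x y'"
  shows "odd (cycle_crossings k vs x y) = odd (cycle_crossings k vs x y')"
proof (rule cycle_crossings_shift_up_clear[OF cyc \<open>y \<le> y'\<close>])
  fix j assume j: "j < k" "y < edge_height k vs j" "edge_height k vs j \<le> y'"
    "(xmid (vs j) < x) \<noteq> (xmid (vs (next_mod k j)) < x)"
  note bounds = edge_height_bounds[OF cyc j(1)] and cj = is_cycleD[OF cyc j(1)]
  have off: "vs j \<noteq> w" "vs (next_mod k j) \<noteq> w"
    using w(2) j(1) cj(1) by auto
  have on_line: "in_rect w x (edge_height k vs j)"
    using assms(5,6) j unfolding in_rect_def by auto
  show False
  proof (rule horizontal_edge_crossing_cases[OF cyc j(1) j(4)])
    assume "l (vs j) < x" "x < r (vs j)"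
    then show False
      using interior_point_not_in_rect[OF cj(2) w(1) off(1)] bounds on_line by blast
  next
    assume "l (vs (next_mod k j)) < x" "x < r (vs (next_mod k j))"
    then show False
      using interior_point_not_in_rect[OF cj(3) w(1) off(2)] bounds on_line by blast
  next
    assume "r (vs j) = x" "l (vs (next_mod k j)) = x"
    then show False
      using contact_point_in_rect[OF cj(2,3) w(1)] off[symmetric] bounds on_line by blast
  next
    assume "r (vs (next_mod k j)) = x" "l (vs j) = x"
    then show False
      using contact_point_in_rect[OF cj(3,2) w(1)] off[symmetric] bounds on_line by blast
  qed
qed

lemma cycle_parity_const_in_rect:
  assumes cyc: "is_cycle k vs" and w: "w \<in> V" "w \<notin> vs ` {..<k}"
    and "in_rect w x1 y1" "in_rect w x2 y2"
  shows "odd (cycle_crossings k vs x1 y1) = odd (cycle_crossings k vs x2 y2)"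
proof -
  have corner: "in_rect w x2 y1"
    using assms(4,5) unfolding in_rect_def by auto
  have "cycle_crossings k vs x1 y1 = cycle_crossings k vs x2 y1"
  proof (cases "x1 \<le> x2")
    case True
    show ?thesis
      using cycle_crossings_eq_in_rect_row[OF cyc w True assms(4) corner] by simp
  next
    case False
    then show ?thesis
      by (intro cycle_crossings_eq_in_rect_row[OF cyc w _ corner assms(4)]) simp
  qed
  also have "odd \<dots> = odd (cycle_crossings k vs x2 y2)"
  proof (cases "y1 \<le> y2")
    case True
    then show ?thesis
      by (intro cycle_parity_eq_in_rect_column[OF cyc w _ corner assms(5)])
  next
    case False
    then show ?thesis
      using cycle_parity_eq_in_rect_column[OF cyc w _ assms(5) corner] by simp
  qed
  finally show ?thesis .
qed

lemma inside_iff_parity_in_rect: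
  assumes "is_cycle k vs" "w \<in> V" "w \<notin> vs ` {..<k}" "in_rect w x y"
  shows "inside_cycle k vs w \<longleftrightarrow> odd (cycle_crossings k vs x y)"
  using cycle_parity_const_in_rect[OF assms(1-3) _ assms(4), of "l w" "b w"]
    l_less_r[OF assms(2)] b_less_t[OF assms(2)]
  unfolding inside_cycle_def in_rect_def by auto

lemma inside_eq_if_adj:
  assumes cyc: "is_cycle k vs" and "u \<in> V" "w \<in> V" "u \<notin> vs ` {..<k}" "w \<notin> vs ` {..<k}"
    and "u \<noteq> w" "E u w"
  shows "inside_cycle k vs u = inside_cycle k vs w"
proof -
  have "r u = l w \<or> r w = l u"
    using adj_contact[OF assms(2,3,6,7)] by blast
  then obtain x where "x = r u \<and> x = l w \<or> x = r w \<and> x = l u"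
    by blast
  then have "in_rect u x (contact_height u w)" "in_rect w x (contact_height u w)"
    using contact_height_bounds[OF assms(2,3,6,7)] l_less_r[OF assms(2)] l_less_r[OF assms(3)]
    unfolding in_rect_def by auto
  then show ?thesis
    using inside_iff_parity_in_rect[OF cyc] assms(2-5) by blast
qed

definition contact_pos :: "'v \<Rightarrow> 'v \<Rightarrow> bool \<times> real" where
  "contact_pos Q e = (r e = l Q, contact_height Q e)"

lemma contact_pos_inj:
  assumes "Q \<in> V" "e \<in> V" "u \<in> V" "e \<noteq> Q" "u \<noteq> Q" "e \<noteq> u" "E e Q" "E u Q"
  shows "contact_pos Q e \<noteq> contact_pos Q u"
proof
  assume eq: "contact_pos Q e = contact_pos Q u"
  have "b e < contact_height Q e" "contact_height Q e < t e"
    "b u < contact_height Q u" "contact_height Q u < t u"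
    using contact_height_bounds[OF assms(2,1,4,7)] contact_height_bounds[OF assms(3,1,5,8)]
    by (auto simp: contact_height_commute)
  moreover have "(r e = l Q) \<noteq> (l e = r Q)" "(r u = l Q) \<noteq> (l u = r Q)"
    using adj_contact_one_side assms by blast+
  ultimately show False
    using eq no_overlap[OF assms(2,3,6)] l_less_r[OF assms(2)] l_less_r[OF assms(3)]
    unfolding contact_pos_def by auto
qed

definition touches_at :: "'v \<Rightarrow> real \<Rightarrow> 'v \<Rightarrow> bool" where
  "touches_at Q X e \<longleftrightarrow> (X = l Q \<and> r e = X) \<or> (X = r Q \<and> l e = X)"

lemma crossing_edge_at_side:
  assumes cyc: "is_cycle k vs" and "i0 < k" "j < k"
    and X: "X = l (vs i0) \<or> X = r (vs i0)"
    and h: "b (vs i0) < edge_height k vs j" "edge_height k vs j \<le> t (vs i0)"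
    and cross: "(xmid (vs j) < X) \<noteq> (xmid (vs (next_mod k j)) < X)"
  shows "j = i0 \<and> touches_at (vs i0) X (vs (next_mod k j))
    \<or> next_mod k j = i0 \<and> touches_at (vs i0) X (vs j)"
proof -
  note cj = is_cycleD[OF cyc \<open>j < k\<close>] and ci = is_cycleD[OF cyc \<open>i0 < k\<close>]
  note bounds = edge_height_bounds[OF cyc \<open>j < k\<close>]
  have Q: "in_rect (vs i0) X (edge_height k vs j)"
    using X h l_less_r[OF ci(2)] unfolding in_rect_def by auto
  have same: "vs i0 = vs j \<longleftrightarrow> j = i0" "vs i0 = vs (next_mod k j) \<longleftrightarrow> next_mod k j = i0"
    using is_cycle_inj[OF cyc] cj(1) \<open>j < k\<close> \<open>i0 < k\<close> by blast+
  have not_strict: "\<not> (l (vs i0) < X \<and> X < r (vs i0))"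
    using X by auto
  show ?thesis
  proof (rule horizontal_edge_crossing_cases[OF cyc \<open>j < k\<close> cross])
    assume strict: "l (vs j) < X" "X < r (vs j)"
    then have "vs j \<noteq> vs i0"
      using not_strict by auto
    from interior_point_not_in_rect[OF cj(2) ci(2) this strict] Q bounds show ?thesis
      by blast
  next
    assume strict: "l (vs (next_mod k j)) < X" "X < r (vs (next_mod k j))"
    then have "vs (next_mod k j) \<noteq> vs i0"
      using not_strict by auto
    from interior_point_not_in_rect[OF cj(3) ci(2) this strict] Q bounds show ?thesis
      by blast
  next
    assume contact: "r (vs j) = X" "l (vs (next_mod k j)) = X"
    then have "vs i0 = vs j \<or> vs i0 = vs (next_mod k j)"
      using contact_point_in_rect[OF cj(2,3) ci(2)] Q bounds by blast
    then show ?thesis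
      using contact by (elim disjE) (simp_all add: same touches_at_def)
  next
    assume contact: "r (vs (next_mod k j)) = X" "l (vs j) = X"
    then have "vs i0 = vs (next_mod k j) \<or> vs i0 = vs j"
      using contact_point_in_rect[OF cj(3,2) ci(2)] Q bounds by blast
    then show ?thesis
      using contact by (elim disjE) (simp_all add: same touches_at_def)
  qed
qed

lemma edge_at_vertex_crosses_side:
  assumes "is_cycle k vs" "j < k" "vs j = Q \<and> touches_at Q X (vs (next_mod k j))
      \<or> vs (next_mod k j) = Q \<and> touches_at Q X (vs j)"
  shows "(xmid (vs j) < X) \<noteq> (xmid (vs (next_mod k j)) < X)"
  using assms(3) xmid_bounds is_cycleD[OF assms(1,2)] unfolding touches_at_def
  by (smt (verit))

lemma parity_along_side:
  assumes cyc: "is_cycle k vs" and "i0 < k" "j0 < k" "next_mod k j0 = i0"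
    and "u \<in> V" "u \<notin> vs ` {..<k}" "E u (vs i0)"
    and X: "X = l (vs i0) \<or> X = r (vs i0)"
  shows "odd (cycle_crossings k vs X (contact_height (vs i0) u))
    \<longleftrightarrow> odd (cycle_crossings k vs X (t (vs i0))) \<noteq>
      ((contact_height (vs i0) u < edge_height k vs i0 \<and> touches_at (vs i0) X (vs (next_mod k i0)))
       \<noteq> (contact_height (vs i0) u < edge_height k vs j0 \<and> touches_at (vs i0) X (vs j0)))"
proof -
  define Q y1 where "Q = vs i0" and "y1 = contact_height Q u"
  define cross where "cross j \<longleftrightarrow> y1 < edge_height k vs j \<and> edge_height k vs j \<le> t Q
    \<and> (xmid (vs j) < X) \<noteq> (xmid (vs (next_mod k j)) < X)" for j
  have ci: "Q \<in> V" "u \<noteq> Q"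
    using is_cycleD[OF cyc \<open>i0 < k\<close>] assms(6) \<open>i0 < k\<close> unfolding Q_def by auto
  have y1: "b Q < y1" "y1 < t Q"
    using contact_height_bounds[OF assms(5) ci(1,2)] assms(7) contact_height_commute
    unfolding y1_def Q_def by auto
  have "i0 \<noteq> j0"
    using next_mod_neq assms(3,4) cyc unfolding is_cycle_def by auto
  have at_i0: "cross i0 \<longleftrightarrow> y1 < edge_height k vs i0 \<and> touches_at Q X (vs (next_mod k i0))"
    using crossing_edge_at_side[OF cyc \<open>i0 < k\<close> \<open>i0 < k\<close> X]
      edge_at_vertex_crosses_side[OF cyc \<open>i0 < k\<close>, of Q X] edge_height_bounds[OF cyc \<open>i0 < k\<close>]
      next_mod_neq[of k i0] y1 cyc
    unfolding cross_def Q_def is_cycle_def by (smt (verit))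
  have at_j0: "cross j0 \<longleftrightarrow> y1 < edge_height k vs j0 \<and> touches_at Q X (vs j0)"
    using crossing_edge_at_side[OF cyc \<open>i0 < k\<close> \<open>j0 < k\<close> X]
      edge_at_vertex_crosses_side[OF cyc \<open>j0 < k\<close>, of Q X] edge_height_bounds[OF cyc \<open>j0 < k\<close>]
      \<open>i0 \<noteq> j0\<close> y1 assms(4)
    unfolding cross_def Q_def by (smt (verit))
  have elsewhere: "\<not> cross j" if "j < k" "j \<noteq> i0" "j \<noteq> j0" for j
    using crossing_edge_at_side[OF cyc \<open>i0 < k\<close> that(1) X] next_mod_inj[OF that(1) assms(3)]
      assms(4) that y1 unfolding cross_def Q_def by force
  have "(\<Sum>j<k. if cross j then 1 else 0) = (\<Sum>j\<in>{i0, j0}. if cross j then 1 else (0::nat))"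
    using elsewhere assms(2,3) by (intro sum.mono_neutral_right) auto
  also have "\<dots> = (if cross i0 then 1 else 0) + (if cross j0 then 1 else 0)"
    using \<open>i0 \<noteq> j0\<close> by simp
  finally have "even (cycle_crossings k vs X y1 + cycle_crossings k vs X (t Q)
      + ((if cross i0 then 1 else 0) + (if cross j0 then 1 else 0)))"
    using crossings_shift_up_parity[OF is_cycle_pos[OF cyc], of y1 "t Q" "\<lambda>i. xmid (vs i)"
        "edge_height k vs" X] y1
    unfolding cycle_crossings_def cross_def by simp
  then show ?thesis
    using at_i0 at_j0 unfolding Q_def y1_def by auto
qed

lemma top_side_parity:
  assumes cyc: "is_cycle k vs" and "i0 < k"
  shows "cycle_crossings k vs (r (vs i0)) (t (vs i0)) = cycle_crossings k vs (l (vs i0)) (t (vs i0))"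
proof (rule cycle_crossings_shift_right_clear[OF cyc])
  show "l (vs i0) \<le> r (vs i0)"
    using l_less_r is_cycleD[OF assms] by force
  fix i assume i: "i < k" "l (vs i0) \<le> xmid (vs i)" "xmid (vs i) < r (vs i0)"
    "b (vs i) < t (vs i0)" "t (vs i0) < t (vs i)"
  then have "vs i \<noteq> vs i0" "in_rect (vs i0) (xmid (vs i)) (t (vs i0))"
    using b_less_t is_cycleD[OF assms] unfolding in_rect_def by force+
  then show False
    using interior_point_not_in_rect[of "vs i" "vs i0"] xmid_bounds is_cycleD[OF cyc] i assms(2)
    by blast
qed

lemma inside_neighbour_iff:
  assumes cyc: "is_cycle k vs" and "i0 < k" "j0 < k" "next_mod k j0 = i0"
    and u: "u \<in> V" "u \<notin> vs ` {..<k}" "E u (vs i0)"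
  shows "inside_cycle k vs u \<longleftrightarrow> odd (cycle_crossings k vs (l (vs i0)) (t (vs i0))) \<noteq>
    boundary_arc (contact_pos (vs i0) (vs (next_mod k i0))) (contact_pos (vs i0) (vs j0))
      (contact_pos (vs i0) u)"
proof -
  define Q where "Q = vs i0"
  note ci = is_cycleD[OF cyc \<open>i0 < k\<close>] and cj = is_cycleD[OF cyc \<open>j0 < k\<close>]
  have "u \<noteq> Q"
    using u(2) \<open>i0 < k\<close> unfolding Q_def by auto
  have heights: "edge_height k vs i0 = contact_height Q (vs (next_mod k i0))"
    "edge_height k vs j0 = contact_height Q (vs j0)"
    unfolding edge_height_def Q_def using assms(4) contact_height_commute by auto
  have y: "b u < contact_height Q u" "contact_height Q u < t u"
    using contact_height_bounds[OF u(1) ci(2) \<open>u \<noteq> Q\<close>[unfolded Q_def] u(3)]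
      contact_height_commute unfolding Q_def by auto
  have sides: "(r e = l Q) \<noteq> (l e = r Q)" if "e \<in> V" "e \<noteq> Q" "E e Q \<or> E Q e" for e
    using adj_contact_one_side[OF that(1) ci(2)] that unfolding Q_def by blast
  have "l Q < r Q"
    using l_less_r ci(2) unfolding Q_def by blast
  show ?thesis
  proof (cases "r u = l Q")
    case True
    have "inside_cycle k vs u \<longleftrightarrow> odd (cycle_crossings k vs (l Q) (contact_height Q u))"
      using inside_iff_parity_in_rect[OF cyc u(1,2)] True y l_less_r[OF u(1)]
      unfolding in_rect_def by auto
    moreover have "touches_at Q (l Q) e \<longleftrightarrow> r e = l Q" for e
      using \<open>l Q < r Q\<close> unfolding touches_at_def by auto
    ultimately show ?thesis
      using parity_along_side[OF cyc assms(2-4) u, of "l Q"] True heights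
      unfolding boundary_arc_def contact_pos_def Q_def by auto
  next
    case False
    then have "l u = r Q"
      using sides[OF u(1) \<open>u \<noteq> Q\<close>] u(3) unfolding Q_def by blast
    then have "inside_cycle k vs u \<longleftrightarrow> odd (cycle_crossings k vs (r Q) (contact_height Q u))"
      using inside_iff_parity_in_rect[OF cyc u(1,2)] y l_less_r[OF u(1)]
      unfolding in_rect_def by auto
    moreover have "touches_at Q (r Q) e \<longleftrightarrow> \<not> r e = l Q"
      if "e \<in> V" "e \<noteq> Q" "E e Q \<or> E Q e" for e
      using sides[OF that] \<open>l Q < r Q\<close> unfolding touches_at_def by auto
    ultimately show ?thesis
      using parity_along_side[OF cyc assms(2-4) u, of "r Q"] False heights
        top_side_parity[OF cyc \<open>i0 < k\<close>] ci cj assms(4)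
      unfolding boundary_arc_def contact_pos_def Q_def by auto
  qed
qed

lemma inside_eq_iff_boundary_arc_eq:
  assumes cyc: "is_cycle k vs" and "i0 < k" "j0 < k" "next_mod k j0 = i0"
    and "u \<in> V" "u \<notin> vs ` {..<k}" "E u (vs i0)"
    and "w \<in> V" "w \<notin> vs ` {..<k}" "E w (vs i0)"
  shows "inside_cycle k vs u = inside_cycle k vs w \<longleftrightarrow>
    boundary_arc (contact_pos (vs i0) (vs (next_mod k i0))) (contact_pos (vs i0) (vs j0))
      (contact_pos (vs i0) u)
    = boundary_arc (contact_pos (vs i0) (vs (next_mod k i0))) (contact_pos (vs i0) (vs j0))
      (contact_pos (vs i0) w)"
  using inside_neighbour_iff[OF assms(1-7)] inside_neighbour_iff[OF assms(1-4,8-10)] by auto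

lemma cycle_crossings_above:
  assumes cyc: "is_cycle k vs" and above: "\<And>i. i < k \<Longrightarrow> t (vs i) < y"
  shows "cycle_crossings k vs x y = 0"
  unfolding cycle_crossings_def crossings_def
proof (intro sum.neutral ballI)
  fix i assume "i \<in> {..<k}"
  then have "edge_height k vs i < y" "edge_height k vs (next_mod k i) < y"
    using edge_height_bounds[OF cyc] above is_cycleD(1)[OF cyc] by (meson lessThan_iff less_trans)+
  then show "(if xmid (vs (next_mod k i)) < x
      \<and> in_span y (edge_height k vs i) (edge_height k vs (next_mod k i)) then 1 else 0) = (0::nat)"
    unfolding in_span_def by auto
qed

lemma higher_rect_starts_above_top:
  assumes "v \<in> V" "w \<in> V" "v \<noteq> w" "l v < x" "x < r v" "l w < x" "x < r w" "t w < t v"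
  shows "t w < b v"
proof (rule ccontr)
  assume "\<not> t w < b v"
  then consider "b v < t w" | "b v = t w"
    by linarith
  then show False
  proof cases
    case 1
    then show False
      using no_overlap[OF assms(1-3)] assms(4-8) b_less_t[OF assms(2)] by linarith
  next
    case 2
    then have "r v = l w \<or> r w = l v"
      using touch_vertical[OF assms(1-3)] assms(4-8) b_less_t[OF assms(2)] by auto
    then show False
      using assms(4-7) by auto
  qed
qed

lemma inside_iff_parity_above:
  assumes cyc: "is_cycle k vs" and w: "w \<in> V" "w \<notin> vs ` {..<k}"
    and x: "l w < x" "x < r w" "x \<notin> l ` V \<union> r ` V"
    and "t w \<le> Y"
    and below: "\<And>v. \<lbrakk>v \<in> vs ` {..<k}; l v \<le> x; x \<le> r v; t w < b v\<rbrakk> \<Longrightarrow> Y \<le> b v"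
  shows "inside_cycle k vs w \<longleftrightarrow> odd (cycle_crossings k vs x Y)"
proof -
  have clear: False
    if v: "v \<in> vs ` {..<k}" "v \<in> V" "l v < x" "x < r v" "b v < h" "h < t v" "t w < h" "h \<le> Y"
    for v h
  proof -
    have "v \<noteq> w" "t w < t v"
      using v w(2) by auto
    then have "t w < b v"
      using higher_rect_starts_above_top[OF v(2) w(1) _ v(3,4) x(1,2)] by blast
    then have "Y \<le> b v"
      using below[OF v(1)] v(3,4) by simp
    then show False
      using v(5,8) by linarith
  qed
  have "odd (cycle_crossings k vs x (t w)) = odd (cycle_crossings k vs x Y)"
  proof (rule cycle_crossings_shift_up_clear[OF cyc \<open>t w \<le> Y\<close>])
    fix j assume j: "j < k" "t w < edge_height k vs j" "edge_height k vs j \<le> Y"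
      "(xmid (vs j) < x) \<noteq> (xmid (vs (next_mod k j)) < x)"
    note cj = is_cycleD[OF cyc j(1)] and bounds = edge_height_bounds[OF cyc j(1)]
    have on_cycle: "vs j \<in> vs ` {..<k}" "vs (next_mod k j) \<in> vs ` {..<k}"
      using j(1) cj(1) by auto
    show False
    proof (rule horizontal_edge_crossing_cases[OF cyc j(1) j(4)])
      assume "l (vs j) < x" "x < r (vs j)"
      then show False
        using clear[OF on_cycle(1) cj(2)] bounds j by blast
    next
      assume "l (vs (next_mod k j)) < x" "x < r (vs (next_mod k j))"
      then show False
        using clear[OF on_cycle(2) cj(3)] bounds j by blast
    qed (use x(3) cj in force)+
  qed
  moreover have "in_rect w x (t w)"
    using x b_less_t[OF w(1)] unfolding in_rect_def by auto
  ultimately show ?thesis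
    using inside_iff_parity_in_rect[OF cyc w] by blast
qed

lemma rect_above_inside:
  assumes cyc: "is_cycle k vs" and "finite V"
    and w: "w \<in> V" "w \<notin> vs ` {..<k}" "inside_cycle k vs w"
    and x: "l w < x" "x < r w" "x \<notin> l ` V \<union> r ` V"
  shows "\<exists>v\<in>V. l v \<le> x \<and> x \<le> r v \<and> t w < b v"
proof (rule ccontr)
  assume none: "\<not> ?thesis"
  define Y where "Y = Max (t ` V) + 1"
  have above: "t v < Y" if "v \<in> V" for v
  proof -
    have "t v \<le> Max (t ` V)"
      using \<open>finite V\<close> that by (intro Max_ge) auto
    then show ?thesis
      unfolding Y_def by simp
  qed
  have "odd (cycle_crossings k vs x Y)"
  proof (rule inside_iff_parity_above[OF cyc w(1,2) x, THEN iffD1, OF _ _ w(3)])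
    show "t w \<le> Y"
      using above[OF w(1)] by simp
    show "Y \<le> b v" if "v \<in> vs ` {..<k}" "l v \<le> x" "x \<le> r v" "t w < b v" for v
      using none that is_cycleD(2)[OF cyc] by blast
  qed
  moreover have "cycle_crossings k vs x Y = 0"
    using cycle_crossings_above[OF cyc] above is_cycleD(2)[OF cyc] by blast
  ultimately show False
    by simp
qed

lemma cycle_or_inside_rect_above:
  assumes cyc: "is_cycle k vs" and "finite V"
    and w: "w \<in> V" "w \<notin> vs ` {..<k}" "inside_cycle k vs w"
  obtains v where "v \<in> V" "t w < b v" "v \<in> vs ` {..<k} \<or> inside_cycle k vs v"
proof -
  have "infinite ({l w<..<r w} - (l ` V \<union> r ` V))"
    using Diff_infinite_finite \<open>finite V\<close> l_less_r[OF w(1)] by simp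
  then obtain x where x: "l w < x" "x < r w" "x \<notin> l ` V \<union> r ` V"
    by (metis Diff_iff greaterThanLessThan_iff infinite_imp_nonempty ex_in_conv)
  define C where "C = {v \<in> V. l v \<le> x \<and> x \<le> r v \<and> t w < b v}"
  have "finite C" "C \<noteq> {}"
    using \<open>finite V\<close> rect_above_inside[OF assms x] unfolding C_def by auto
  obtain v0 where v0: "v0 \<in> C" and lowest: "\<And>v. v \<in> C \<Longrightarrow> b v0 \<le> b v"
  proof -
    have "Min (b ` C) \<in> b ` C"
      using \<open>finite C\<close> \<open>C \<noteq> {}\<close> by (intro Min_in) auto
    then obtain v0 where "v0 \<in> C" "b v0 = Min (b ` C)"
      by auto
    then show ?thesis
      using that \<open>finite C\<close> by auto
  qed
  then have v0_C: "v0 \<in> V" "l v0 \<le> x" "x \<le> r v0" "t w < b v0"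
    unfolding C_def by auto
  have "odd (cycle_crossings k vs x (b v0))"
  proof (rule inside_iff_parity_above[OF cyc w(1,2) x, THEN iffD1, OF _ _ w(3)])
    show "t w \<le> b v0"
      using v0_C(4) by simp
    show "b v0 \<le> b v" if "v \<in> vs ` {..<k}" "l v \<le> x" "x \<le> r v" "t w < b v" for v
      using lowest that is_cycleD(2)[OF cyc] unfolding C_def by blast
  qed
  moreover have "in_rect v0 x (b v0)"
    using v0_C b_less_t[OF v0_C(1)] unfolding in_rect_def by auto
  ultimately have "v0 \<in> vs ` {..<k} \<or> inside_cycle k vs v0"
    using inside_iff_parity_in_rect[OF cyc v0_C(1)] by blast
  then show ?thesis
    using that v0_C(1,4) by blast
qed

text \<open>Take the inside vertex with the highest top.  The rectangle found above it cannot be inside,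
  and if it is a cycle rectangle, an inside neighbour of it would reach above that top, since
  contacts are vertical segments of positive length.\<close>

lemma cycle_vertex_without_inside_neighbour:
  assumes cyc: "is_cycle k vs" and "finite V"
    and w: "w \<in> V" "w \<notin> vs ` {..<k}" "inside_cycle k vs w"
  obtains i where "i < k"
    "\<And>p. \<lbrakk>p \<in> V; p \<notin> vs ` {..<k}; inside_cycle k vs p\<rbrakk> \<Longrightarrow> \<not> E (vs i) p"
proof -
  define S where "S = {p \<in> V. p \<notin> vs ` {..<k} \<and> inside_cycle k vs p}"
  have "finite S" "w \<in> S"
    using \<open>finite V\<close> w unfolding S_def by auto
  obtain ws where ws: "ws \<in> S" and top: "\<And>p. p \<in> S \<Longrightarrow> t p \<le> t ws"
  proof -
    have "Max (t ` S) \<in> t ` S"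
      using \<open>finite S\<close> \<open>w \<in> S\<close> by (intro Max_in) auto
    then obtain ws where "ws \<in> S" "t ws = Max (t ` S)"
      by auto
    then show ?thesis
      using that \<open>finite S\<close> by auto
  qed
  then obtain v where v: "v \<in> V" "t ws < b v" "v \<in> vs ` {..<k} \<or> inside_cycle k vs v"
    using cycle_or_inside_rect_above[OF cyc \<open>finite V\<close>] unfolding S_def by blast
  show ?thesis
  proof (cases "v \<in> vs ` {..<k}")
    case False
    then have "t v \<le> t ws"
      using top v unfolding S_def by blast
    then show ?thesis
      using v(2) b_less_t[OF v(1)] by simp
  next
    case True
    then obtain i where i: "i < k" "v = vs i" by auto
    show ?thesis
    proof (rule that[OF i(1)])
      fix p assume p: "p \<in> V" "p \<notin> vs ` {..<k}" "inside_cycle k vs p"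
      then have "t p \<le> t ws" "p \<noteq> v"
        using top True unfolding S_def by auto
      moreover have "E v p \<Longrightarrow> b v < t p"
        using adj_contact[OF v(1) p(1)] \<open>p \<noteq> v\<close> by blast
      ultimately show "\<not> E (vs i) p"
        using v(2) i(2) by auto
    qed
  qed
qed

end

section \<open>The graph \<open>W'_g\<close>\<close>

lemma wp_adj_commute: "wp_adj g u v = wp_adj g v u"
  unfolding wp_adj_def by auto

lemma wp_adj_Cyc: "i < g \<Longrightarrow> wp_adj g (Cyc i) (Cyc (Suc i mod g))"
  unfolding wp_adj_def by simp

lemma wp_adj_Apex: "\<lbrakk>a < 2; i < g; 0 < g div 2\<rbrakk> \<Longrightarrow> wp_adj g (Apex a) (Sub a i 0)"
  unfolding wp_adj_def by simp

lemma wp_adj_Sub: "\<lbrakk>a < 2; i < g; Suc j < g div 2\<rbrakk> \<Longrightarrow> wp_adj g (Sub a i j) (Sub a i (Suc j))"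
  unfolding wp_adj_def by simp

lemma wp_adj_Sub_Cyc: "\<lbrakk>a < 2; i < g; Suc j = g div 2\<rbrakk> \<Longrightarrow> wp_adj g (Sub a i j) (Cyc i)"
  unfolding wp_adj_def by simp

lemma Cyc_in_wp_verts: "i < g \<Longrightarrow> Cyc i \<in> wp_verts g"
  unfolding wp_verts_def by auto

lemma Apex_in_wp_verts: "a < 2 \<Longrightarrow> Apex a \<in> wp_verts g"
  unfolding wp_verts_def by auto

lemma Sub_in_wp_verts: "\<lbrakk>a < 2; i < g; j < g div 2\<rbrakk> \<Longrightarrow> Sub a i j \<in> wp_verts g"
  unfolding wp_verts_def by auto

lemma finite_wp_verts: "finite (wp_verts g)"
proof -
  have "{Sub a i j | a i j. a < 2 \<and> i < g \<and> j < g div 2}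
      \<subseteq> (\<lambda>(a, i, j). Sub a i j) ` ({..<2} \<times> {..<g} \<times> {..<g div 2})"
  proof
    fix v assume "v \<in> {Sub a i j | a i j. a < 2 \<and> i < g \<and> j < g div 2}"
    then obtain a i j where "v = Sub a i j" "a < 2" "i < g" "j < g div 2"
      by blast
    then show "v \<in> (\<lambda>(a, i, j). Sub a i j) ` ({..<2} \<times> {..<g} \<times> {..<g div 2})"
      by (intro image_eqI[of _ _ "(a, i, j)"]) auto
  qed
  then have "finite {Sub a i j | a i j. a < 2 \<and> i < g \<and> j < g div 2}"
    by (rule finite_subset) auto
  moreover have "{Cyc i | i. i < g} = Cyc ` {..<g}" "{Apex a | a. a < 2} = Apex ` {..<2}"
    by auto
  ultimately show ?thesis
    unfolding wp_verts_def by simp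
qed

definition apex_cycle :: "nat \<Rightarrow> nat \<Rightarrow> nat \<Rightarrow> nat \<Rightarrow> wv" where
  "apex_cycle d i1 i2 n =
    (if n = 0 then Apex 0 else if n \<le> d then Sub 0 i1 (n - 1) else if n = d + 1 then Cyc i1
     else if n = d + 2 then Cyc i2 else Sub 0 i2 (2 * d + 2 - n))"

lemma apex_cycle_cases:
  "v = apex_cycle d i1 i2 n \<Longrightarrow>
    v = Apex 0 \<or> v = Cyc i1 \<or> v = Cyc i2 \<or> (\<exists>j. v = Sub 0 i1 j \<or> v = Sub 0 i2 j)"
  unfolding apex_cycle_def by auto

lemma wp_adj_apex_cycle:
  assumes "3 \<le> g" "i1 < g" "i2 < g" "wp_adj g (Cyc i1) (Cyc i2)" "n < 2 * (g div 2) + 3"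
  shows "wp_adj g (apex_cycle (g div 2) i1 i2 n)
    (apex_cycle (g div 2) i1 i2 (next_mod (2 * (g div 2) + 3) n))"
proof -
  define d where "d = g div 2"
  have "1 \<le> d"
    using assms(1) unfolding d_def by auto
  consider "n = 0" | "1 \<le> n \<and> n < d" | "n = d" | "n = d + 1" | "n = d + 2"
      | "d + 3 \<le> n \<and> n < 2 * d + 2" | "n = 2 * d + 2"
    using assms(5) unfolding d_def by linarith
  then show ?thesis
    using assms \<open>1 \<le> d\<close> unfolding d_def[symmetric]
    by cases (auto simp: apex_cycle_def next_mod_eq wp_adj_def d_def)
qed

locale wp_rect_rep = rect_contact_rep "wp_verts g" "wp_adj g" l r b t
  for g :: nat and l r b t :: "wv \<Rightarrow> real" +
  assumes three_le_g: "3 \<le> g"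
begin

abbreviation ray_end :: "nat \<Rightarrow> nat \<Rightarrow> wv" where
  "ray_end a i \<equiv> Sub a i (g div 2 - 1)"

lemma ray_end_in_wp_verts: "\<lbrakk>a < 2; i < g\<rbrakk> \<Longrightarrow> ray_end a i \<in> wp_verts g"
  using three_le_g by (auto intro: Sub_in_wp_verts)

lemma wp_adj_ray_end_Cyc: "\<lbrakk>a < 2; i < g\<rbrakk> \<Longrightarrow> wp_adj g (ray_end a i) (Cyc i)"
  using three_le_g by (auto intro: wp_adj_Sub_Cyc)

lemma is_cycle_Cyc: "is_cycle g Cyc"
  unfolding is_cycle_def using three_le_g
  by (auto simp: Cyc_in_wp_verts wp_adj_Cyc next_mod_def inj_on_def)

lemma is_cycle_apex_cycle:
  assumes "i1 < g" "i2 < g" "i1 \<noteq> i2" "wp_adj g (Cyc i1) (Cyc i2)"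
  shows "is_cycle (2 * (g div 2) + 3) (apex_cycle (g div 2) i1 i2)"
proof -
  define d where "d = g div 2"
  have "apex_cycle d i1 i2 n \<in> wp_verts g" if "n < 2 * d + 3" for n
    using that assms three_le_g unfolding apex_cycle_def d_def
    by (auto simp: Cyc_in_wp_verts Apex_in_wp_verts Sub_in_wp_verts)
  moreover have "inj_on (apex_cycle d i1 i2) {..<2 * d + 3}"
    unfolding inj_on_def apex_cycle_def using assms(3) by (auto split: if_splits)
  ultimately show ?thesis
    unfolding is_cycle_def using wp_adj_apex_cycle[OF three_le_g assms(1,2,4)]
    unfolding d_def by auto
qed

lemma inside_Sub_eq_Apex:
  assumes cyc: "is_cycle k vs" and "a < 2" "i < g" "j < g div 2"
    and avoid: "Apex a \<notin> vs ` {..<k}" "\<And>i j. Sub a i j \<notin> vs ` {..<k}"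
  shows "inside_cycle k vs (Sub a i j) = inside_cycle k vs (Apex a)"
  using \<open>j < g div 2\<close>
proof (induction j)
  case 0
  then show ?case
    using inside_eq_if_adj[OF cyc Sub_in_wp_verts[OF assms(2,3) 0] Apex_in_wp_verts[OF assms(2)]
        avoid(2) avoid(1)] wp_adj_Apex[OF assms(2,3)] wp_adj_commute by auto
next
  case (Suc j)
  then have "j < g div 2" by simp
  then have "inside_cycle k vs (Sub a i (Suc j)) = inside_cycle k vs (Sub a i j)"
    using inside_eq_if_adj[OF cyc Sub_in_wp_verts[OF assms(2,3) Suc.prems]
        Sub_in_wp_verts[OF assms(2,3)] avoid(2) avoid(2)] wp_adj_Sub[OF assms(2,3) Suc.prems]
      wp_adj_commute by auto
  then show ?case
    using Suc.IH[OF \<open>j < g div 2\<close>] by simp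
qed

lemma inside_ray_end_eq_Apex:
  assumes "is_cycle k vs" "a < 2" "i < g"
    and "Apex a \<notin> vs ` {..<k}" "\<And>i j. Sub a i j \<notin> vs ` {..<k}"
  shows "inside_cycle k vs (ray_end a i) = inside_cycle k vs (Apex a)"
  using inside_Sub_eq_Apex[OF assms(1-3) _ assms(4,5)] three_le_g by simp

lemma inside_Cyc_eq_Apex:
  assumes cyc: "is_cycle k vs" and "a < 2" "i < g" "Cyc i \<notin> vs ` {..<k}"
    and avoid: "Apex a \<notin> vs ` {..<k}" "\<And>i j. Sub a i j \<notin> vs ` {..<k}"
  shows "inside_cycle k vs (Cyc i) = inside_cycle k vs (Apex a)"
  using inside_eq_if_adj[OF cyc Cyc_in_wp_verts[OF assms(3)] ray_end_in_wp_verts[OF assms(2,3)]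
      assms(4) avoid(2)] wp_adj_ray_end_Cyc[OF assms(2,3)] wp_adj_commute
    inside_ray_end_eq_Apex[OF cyc assms(2,3) avoid] by auto

text \<open>The cycle through \<open>Apex 0\<close>, \<open>Cyc 0\<close> and \<open>Cyc c\<close> does not separate the remaining rim
  neighbour \<open>Cyc c'\<close> of \<open>Cyc 0\<close> from \<open>ray_end 1 0\<close>: both are joined through \<open>Apex 1\<close>.\<close>

lemma boundary_arc_apex_cycle:
  assumes c: "c < g" "c \<noteq> 0" "wp_adj g (Cyc 0) (Cyc c)"
    and c': "c' < g" "c' \<noteq> 0" "c' \<noteq> c" "wp_adj g (Cyc c') (Cyc 0)"
  defines "pos \<equiv> contact_pos (Cyc 0)"
  shows "boundary_arc (pos (Cyc c)) (pos (ray_end 0 0)) (pos (Cyc c'))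
    = boundary_arc (pos (Cyc c)) (pos (ray_end 0 0)) (pos (ray_end 1 0))"
proof -
  define d where "d = g div 2"
  define f where "f = apex_cycle d 0 c"
  have "0 < g" "1 \<le> d"
    using three_le_g unfolding d_def by auto
  have cyc: "is_cycle (2 * d + 3) f"
    using is_cycle_apex_cycle[of 0 c] c \<open>0 < g\<close> unfolding f_def d_def by auto
  have idx: "d + 1 < 2 * d + 3" "d < 2 * d + 3" "next_mod (2 * d + 3) d = d + 1"
    "next_mod (2 * d + 3) (d + 1) = d + 2"
    unfolding next_mod_def by auto
  have f_at: "f (d + 1) = Cyc 0" "f (d + 2) = Cyc c" "f d = ray_end 0 0"
    using \<open>1 \<le> d\<close> unfolding f_def apex_cycle_def d_def by auto
  have off: "Cyc c' \<notin> f ` {..<2 * d + 3}" "ray_end 1 0 \<notin> f ` {..<2 * d + 3}"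
    "Apex 1 \<notin> f ` {..<2 * d + 3}" "\<And>i j. Sub 1 i j \<notin> f ` {..<2 * d + 3}"
    unfolding f_def using c' by (auto dest!: apex_cycle_cases)
  have "inside_cycle (2 * d + 3) f (Cyc c') = inside_cycle (2 * d + 3) f (ray_end 1 0)"
    using inside_Cyc_eq_Apex[OF cyc _ c'(1) off(1) off(3,4)]
      inside_ray_end_eq_Apex[OF cyc _ \<open>0 < g\<close> off(3,4)] by simp
  then show ?thesis
    using inside_eq_iff_boundary_arc_eq[OF cyc idx(1,2,3) Cyc_in_wp_verts[OF c'(1)] off(1) _
        ray_end_in_wp_verts[of 1 0] off(2)] c'(4) wp_adj_ray_end_Cyc[of 1 0] f_at idx(4) \<open>0 < g\<close>
    unfolding pos_def by simp
qed

text \<open>The four neighbours \<open>Cyc (g - 1)\<close>, \<open>Cyc 1\<close>, \<open>ray_end 0 0\<close>, \<open>ray_end 1 0\<close> of \<open>Cyc 0\<close> touch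
  it at four distinct boundary points.  Two applications of \<open>boundary_arc_apex_cycle\<close> fix their
  cyclic order so that the rim separates the two ray ends, and hence the two apexes.\<close>

lemma inside_Apex_differ: "inside_cycle g Cyc (Apex 0) \<noteq> inside_cycle g Cyc (Apex 1)"
proof -
  define A B P N where "A = Cyc (g - 1)" and "B = Cyc 1" and "P = ray_end 0 0" and "N = ray_end 1 0"
  define pos where "pos = contact_pos (Cyc 0)"
  have g: "0 < g" "1 < g" "g - 1 < g" "g - 1 \<noteq> 0" "g - 1 \<noteq> 1"
    using three_le_g by auto
  have avoid_Cyc: "Apex a \<notin> Cyc ` {..<g}" "Sub a i j \<notin> Cyc ` {..<g}" for a i j
    by auto
  have in_V: "Cyc 0 \<in> wp_verts g" "A \<in> wp_verts g" "B \<in> wp_verts g" "P \<in> wp_verts g"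
    "N \<in> wp_verts g"
    unfolding A_def B_def P_def N_def using g ray_end_in_wp_verts by (auto intro: Cyc_in_wp_verts)
  have adj: "wp_adj g A (Cyc 0)" "wp_adj g B (Cyc 0)" "wp_adj g P (Cyc 0)" "wp_adj g N (Cyc 0)"
    using wp_adj_Cyc[OF g(3)] wp_adj_Cyc[OF g(1)] wp_adj_commute[of g] wp_adj_ray_end_Cyc g
    unfolding A_def B_def P_def N_def by auto
  have "distinct [Cyc 0, A, B, P, N]"
    unfolding A_def B_def P_def N_def using g by auto
  then have "distinct [pos A, pos B, pos P, pos N]"
    using contact_pos_inj[OF in_V(1)] in_V adj unfolding pos_def by auto
  moreover have "boundary_arc (pos B) (pos P) (pos A) = boundary_arc (pos B) (pos P) (pos N)"
    "boundary_arc (pos A) (pos P) (pos B) = boundary_arc (pos A) (pos P) (pos N)"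
    using boundary_arc_apex_cycle[of 1 "g - 1"] boundary_arc_apex_cycle[of "g - 1" 1] adj g
      wp_adj_commute[of g]
    unfolding pos_def A_def B_def P_def N_def by auto
  ultimately have "boundary_arc (pos B) (pos A) (pos P) \<noteq> boundary_arc (pos B) (pos A) (pos N)"
    by (rule boundary_arc_four_points)
  moreover have "next_mod g (g - 1) = 0" "next_mod g 0 = 1"
    unfolding next_mod_def using g by auto
  ultimately have "inside_cycle g Cyc P \<noteq> inside_cycle g Cyc N"
    using inside_eq_iff_boundary_arc_eq[OF is_cycle_Cyc g(1,3) _ in_V(4) _ _ in_V(5)] adj
    unfolding pos_def A_def B_def P_def N_def by auto
  moreover have "inside_cycle g Cyc P = inside_cycle g Cyc (Apex 0)"
    "inside_cycle g Cyc N = inside_cycle g Cyc (Apex 1)"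
    using inside_ray_end_eq_Apex[OF is_cycle_Cyc _ g(1) avoid_Cyc] unfolding P_def N_def by auto
  ultimately show ?thesis by simp
qed

lemma not_inside_Apex:
  assumes "a < 2"
  shows "\<not> inside_cycle g Cyc (Apex a)"
proof
  assume "inside_cycle g Cyc (Apex a)"
  then obtain i where "i < g"
    and no_inside_nb: "\<And>p. \<lbrakk>p \<in> wp_verts g; p \<notin> Cyc ` {..<g}; inside_cycle g Cyc p\<rbrakk>
      \<Longrightarrow> \<not> wp_adj g (Cyc i) p"
    using cycle_vertex_without_inside_neighbour[OF is_cycle_Cyc finite_wp_verts
        Apex_in_wp_verts[OF assms]] by blast
  have "inside_cycle g Cyc (ray_end a i)"
    using inside_ray_end_eq_Apex[OF is_cycle_Cyc assms \<open>i < g\<close>] \<open>inside_cycle g Cyc (Apex a)\<close>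
    by auto
  moreover have "wp_adj g (Cyc i) (ray_end a i)"
    using wp_adj_ray_end_Cyc[OF assms \<open>i < g\<close>] wp_adj_commute by metis
  ultimately show False
    using no_inside_nb ray_end_in_wp_verts[OF assms \<open>i < g\<close>] by blast
qed

end

theorem mainTheorem5:
  fixes g :: nat
  assumes "g \<ge> 3"
  shows "\<not> cbu2 (wp_verts g) (wp_adj g)"
proof
  assume "cbu2 (wp_verts g) (wp_adj g)"
  then obtain l r b t where "rect_contact_rep (wp_verts g) (wp_adj g) l r b t"
    using cbu2_imp_rect_contact_rep by blast
  then have "wp_rect_rep g l r b t"
    using assms by (simp add: wp_rect_rep_def wp_rect_rep_axioms_def)
  then interpret wp_rect_rep g l r b t .
  show False
    using inside_Apex_differ not_inside_Apex[of 0] not_inside_Apex[of 1] by simp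
qed

end
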